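(* Let $W=(w_{ij})\in\mathrm{GL}(n,\mathbb{Q})\cap\mathrm{Mat}(n,\mathbb{Z})$ with $\gcd(w_{ij})=1$. Let $s$ be the gcd of the entries of $\mathrm{Adj}(W)$, let $\mathbf{v}$ be the sum of the rows of $\mathrm{Adj}(W)$, and set $q_0=|\det\widehat W|$ and $\delta=|\det W|/s$. Then the following are equivalent: (a) $W$ is P-admissible; (b) every entry of $\mathbf{v}$ is divisible by $q_0s$; (c) $q_0$ divides $\delta$ and the vector $\frac{\delta}{q_0}(1,\ldots,1)$ lies in the lattice generated by the rows of $W$.
   Context: For $V=(\mathbf{v}_0,\ldots,\mathbf{v}_n)\in\mathrm{Mat}(n,n+1;\mathbb{Z})$, $V_j$ is the determinant of $V$ with column $\mathbf{v}_j$ deleted and $V^0=(\mathbf{v}_1,\ldots,\mathbf{v}_n)$. $V$ is F-admissible if all $V_j\neq0$, $\gcd(V_0,\ldots,V_n)=1$ and $\sum_j|V_j|\mathbf{v}_j=0$. For $A\in\mathrm{GL}(n,\mathbb{Q})$, $A^*=(A^{-1})^T$. The weighted transverse of $V$ is $(V^0)^*_Q=(V^0)^*\cdot\delta_Q\,\mathrm{diag}(1/|V_1|,\ldots,1/|V_n|)$ with $Q=(|V_0|,\ldots,|V_n|)$ and $\delta_Q=\mathrm{lcm}(Q)$. $W\in\mathrm{Mat}(n,\mathbb{Z})$ is P-admissible if $W=(V^0)^*_Q$ for some F-admissible $V$ with $Q=(|V_0|,\ldots,|V_n|)$. $\mathrm{Adj}(W)=\det(W)W^{-1}$; $s_i$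 is the gcd of the $i$-th row of $\mathrm{Adj}(W)$; $\widehat W=\mathrm{diag}(|\det W|/s_1,\ldots,|\det W|/s_n)\cdot W^{-1}$. *)

theory Defs
  imports "Jordan_Normal_Form.Determinant" "Jordan_Normal_Form.Matrix"
begin

definition inv_mat :: "'a::field mat \<Rightarrow> 'a mat" where
  "inv_mat A = (THE B. B \<in> carrier_mat (dim_row A) (dim_row A) \<and>
       A * B = 1\<^sub>m (dim_row A) \<and> B * A = 1\<^sub>m (dim_row A))"

definition star_mat :: "'a::field mat \<Rightarrow> 'a mat" where
  "star_mat A = transpose_mat (inv_mat A)"

definition del_col :: "'a mat \<Rightarrow> nat \<Rightarrow> 'a mat" where
  "del_col V j = mat (dim_row V) (dim_col V - 1)
      (\<lambda>(i,k). V $$ (i, if k < j then k else Suc k))"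

definition Vdet :: "int mat \<Rightarrow> nat \<Rightarrow> int" where
  "Vdet V j = det (del_col V j)"

definition V0 :: "int mat \<Rightarrow> int mat" where
  "V0 V = del_col V 0"

definition F_admissible :: "nat \<Rightarrow> int mat \<Rightarrow> bool" where
  "F_admissible n V \<longleftrightarrow>
     V \<in> carrier_mat n (Suc n) \<and>
     (\<forall>j\<le>n. Vdet V j \<noteq> 0) \<and>
     Gcd (Vdet V ` {0..n}) = 1 \<and>
     (\<forall>i<n. (\<Sum>j\<le>n. \<bar>Vdet V j\<bar> * V $$ (i,j)) = 0)"

definition deltaQ :: "nat \<Rightarrow> int mat \<Rightarrow> int" where
  "deltaQ n V = Lcm ((\<lambda>j. \<bar>Vdet V j\<bar>) ` {0..n})"

definition weighted_transverse :: "nat \<Rightarrow> int mat \<Rightarrow> rat mat" where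
  "weighted_transverse n V =
     star_mat (map_mat rat_of_int (V0 V)) *
     (rat_of_int (deltaQ n V) \<cdot>\<^sub>m mat_diag n (\<lambda>k. 1 / rat_of_int \<bar>Vdet V (Suc k)\<bar>))"

definition P_admissible :: "nat \<Rightarrow> int mat \<Rightarrow> bool" where
  "P_admissible n W \<longleftrightarrow> W \<in> carrier_mat n n \<and>
     (\<exists>V. F_admissible n V \<and> map_mat rat_of_int W = weighted_transverse n V)"

definition row_gcd_adj :: "int mat \<Rightarrow> nat \<Rightarrow> int" where
  "row_gcd_adj W i = Gcd {adj_mat W $$ (i,j) | j. j < dim_col W}"

definition W_hat :: "int mat \<Rightarrow> rat mat" where
  "W_hat W = mat_diag (dim_row W)
       (\<lambda>i. rat_of_int \<bar>det W\<bar> / rat_of_int (row_gcd_adj W i)) *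
     inv_mat (map_mat rat_of_int W)"

end

theory Submission
  imports Defs
begin

text \<open>
  Let s_i be the content of row i of Adj W. Dividing that row by s_i and by the sign of det W
  gives the columns of an integer matrix U with U^T W = diag(|det W| / s_i); hence
  q_0 = |det \<hat>W| = |det U| is an integer.

  (b) \<Leftrightarrow> (c) is Cramer's rule: W^T c = t (1,...,1) if and only if det W \<cdot> c = t v.

  (a) \<Rightarrow> (b): if W is the weighted transverse of V, then (V^0)^T W is diagonal, which expresses
  Adj W through V^0 and the |V_j|. The relation \<Sum> |V_j| v_j = 0 turns the column sums of Adj W
  into multiples of the first column of V, and the coprimality of the maximal minors V_j gives
  the divisibility by q_0 s.

  (b) \<Rightarrow> (a): put V = (v_0 | U), with v_0 chosen so that q_0 v_0 + \<Sum> (s_i/s) u_i = 0. By Cramer's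
  rule the maximal minors of V are then q_0 and the s_i/s up to sign, and their lcm is
  |det W|/s: every entry of W^T V is divisible by |det W|/(s \<cdot> lcm), hence so is every entry
  of W, which is primitive.
\<close>


lemma index_mult_mat_sum:
  assumes "A \<in> carrier_mat nr m" "B \<in> carrier_mat m nc" "i < nr" "j < nc"
  shows "(A * B) $$ (i,j) = (\<Sum>k<m. A $$ (i,k) * B $$ (k,j))"
  using assms by (simp add: scalar_prod_def lessThan_atLeast0)

lemma det_mat_diag: "det (mat_diag n f) = (\<Prod>i<n. f i)"
proof -
  have "upper_triangular (mat_diag n f)" unfolding upper_triangular_def mat_diag_def by auto
  then have "det (mat_diag n f) = prod_list (diag_mat (mat_diag n f))"
    by (rule det_upper_triangular[OF _ mat_diag_dim])
  also have "diag_mat (mat_diag n f) = map f [0..<n]" unfolding diag_mat_def mat_diag_def by auto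
  finally show ?thesis by (simp add: prod.list_conv_set_nth atLeast0LessThan)
qed

lemma inv_mat_eqI:
  fixes A B :: "'a::field mat"
  assumes A: "A \<in> carrier_mat n n" and B: "B \<in> carrier_mat n n" and AB: "A * B = 1\<^sub>m n"
  shows "inv_mat A = B"
proof -
  have BA: "B * A = 1\<^sub>m n" by (rule mat_mult_left_right_inverse[OF A B AB])
  have dim: "dim_row A = n" using A by auto
  show ?thesis unfolding inv_mat_def dim
  proof (rule the_equality)
    fix C assume C: "C \<in> carrier_mat n n \<and> A * C = 1\<^sub>m n \<and> C * A = 1\<^sub>m n"
    then have "C = C * (A * B)" using AB by auto
    also have "\<dots> = (C * A) * B" using C by (metis assoc_mult_mat[OF _ A B])
    finally show "C = B" using C B by auto
  qed (use B AB BA in auto)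
qed

lemma of_int_mult_scaled_adj:
  assumes A: "A \<in> carrier_mat n n" and "det A \<noteq> 0"
  shows "map_mat rat_of_int A * ((1 / rat_of_int (det A)) \<cdot>\<^sub>m map_mat rat_of_int (adj_mat A)) = 1\<^sub>m n"
proof -
  have "map_mat rat_of_int A * map_mat rat_of_int (adj_mat A) = map_mat rat_of_int (A * adj_mat A)"
    using A adj_mat(1)[OF A] by (simp add: of_int_hom.mat_hom_mult)
  also have "\<dots> = rat_of_int (det A) \<cdot>\<^sub>m 1\<^sub>m n"
    using adj_mat(2)[OF A] by (auto simp: of_int_hom.mat_hom_one)
  moreover have "(1 / rat_of_int (det A)) \<cdot>\<^sub>m (rat_of_int (det A) \<cdot>\<^sub>m 1\<^sub>m n) = 1\<^sub>m n"
    using \<open>det A \<noteq> 0\<close> by (intro eq_matI) auto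
  ultimately show ?thesis
    using A adj_mat(1)[OF A] by (simp add: mult_smult_distrib[of _ n n _ n])
qed

lemma inv_mat_of_int:
  assumes A: "A \<in> carrier_mat n n" and "det A \<noteq> 0"
  shows "inv_mat (map_mat rat_of_int A) = (1 / rat_of_int (det A)) \<cdot>\<^sub>m map_mat rat_of_int (adj_mat A)"
  using of_int_mult_scaled_adj[OF assms] A adj_mat(1)[OF A] by (intro inv_mat_eqI) auto

lemma Gcd_mult_int: "Gcd ((*) c ` A) = \<bar>c\<bar> * Gcd (A :: int set)"
  by (simp add: Gcd_mult abs_mult)

lemma Gcd_image_mult_int: "Gcd ((\<lambda>x. c * f x) ` S) = \<bar>c\<bar> * Gcd (f ` S :: int set)"
  using Gcd_mult_int[of c "f ` S"] by (simp add: image_image)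

lemma dvd_of_dvd_mult_Gcd_one:
  fixes d y :: int
  assumes "Gcd A = 1" and "\<And>a. a \<in> A \<Longrightarrow> d dvd a * y"
  shows "d dvd y"
proof -
  have "d dvd Gcd ((*) y ` A)" using assms(2) by (intro Gcd_greatest) (auto simp: mult.commute)
  then show ?thesis using assms(1) by (simp add: Gcd_mult_int)
qed

lemma map_mat_of_int_mat_diag:
  "map_mat rat_of_int (mat_diag n f) = mat_diag n (\<lambda>i. rat_of_int (f i))"
  by (rule eq_matI) (auto simp: mat_diag_def)

lemma del_col_map_mat: "del_col (map_mat f V) j = map_mat f (del_col V j)"
  by (rule eq_matI) (auto simp: del_col_def)

lemma del_col_mult:
  assumes "A \<in> carrier_mat nr m" and "B \<in> carrier_mat m (Suc nc)"
  shows "del_col (A * B) j = A * del_col B j"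
  by (rule eq_matI) (use assms in \<open>auto simp: del_col_def scalar_prod_def\<close>)

section \<open>Maximal minors of n \<times> (n+1) matrices\<close>

text \<open>For a maximal minor D of V, B D is a submatrix of B V and B D Adj D = det D \<cdot> B.\<close>
lemma dvd_entries_of_dvd_mult:
  fixes B V :: "int mat"
  assumes B: "B \<in> carrier_mat k n" and V: "V \<in> carrier_mat n (Suc n)"
    and minors: "Gcd (Vdet V ` {0..n}) = 1"
    and dvd: "\<And>a c. a < k \<Longrightarrow> c < Suc n \<Longrightarrow> m dvd (B * V) $$ (a,c)"
    and a: "a < k" and b: "b < n"
  shows "m dvd B $$ (a,b)"
proof (rule dvd_of_dvd_mult_Gcd_one[OF minors])
  fix d assume "d \<in> Vdet V ` {0..n}"
  then obtain j where d: "d = det (del_col V j)" unfolding Vdet_def by auto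
  let ?D = "del_col V j"
  have D: "?D \<in> carrier_mat n n" using V unfolding del_col_def by auto
  have BD: "B * ?D = del_col (B * V) j" using del_col_mult[OF B V] by simp
  have "(B * ?D) * adj_mat ?D = B * (?D * adj_mat ?D)"
    using B D adj_mat(1)[OF D] by (simp add: assoc_mult_mat[of _ k n _ n _ n])
  also have "\<dots> = det ?D \<cdot>\<^sub>m B"
    using B adj_mat(2)[OF D] by (simp add: mult_smult_distrib[of _ k n _ n])
  finally have "det ?D * B $$ (a,b) = ((B * ?D) * adj_mat ?D) $$ (a,b)" using a b B by simp
  also have "\<dots> = (\<Sum>l<n. (B * ?D) $$ (a,l) * adj_mat ?D $$ (l,b))"
    by (rule index_mult_mat_sum) (use B D adj_mat(1)[OF D] a b in auto)
  moreover have "m dvd (B * ?D) $$ (a,l)" if "l < n" for l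
    using dvd[OF a, of "if l < j then l else Suc l"] that a B V
    unfolding BD by (simp add: del_col_def)
  ultimately show "m dvd d * B $$ (a,b)" unfolding d by (auto intro!: dvd_sum dvd_mult2)
qed

text \<open>If x is a relation among the columns v_0, ..., v_n of V with x 0 \<noteq> 0, then
  multiplying (v_1, ..., v_n) by this matrix rebuilds v_0 in the first column and drops v_(i+1).\<close>
definition relation_col_op :: "nat \<Rightarrow> nat \<Rightarrow> (nat \<Rightarrow> 'a) \<Rightarrow> 'a::field mat" where
  "relation_col_op n i x = mat n n (\<lambda>(a,b). if b = 0 then - x (Suc a) / x 0
     else if a = (if b \<le> i then b - 1 else b) then 1 else 0)"

lemma del_col_Suc_eq_mult_relation_col_op:
  fixes V :: "'a::field mat"
  assumes V: "V \<in> carrier_mat n (Suc n)" and x0: "x 0 \<noteq> 0"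
    and rel: "\<And>j. j < n \<Longrightarrow> (\<Sum>c\<le>n. x c * V $$ (j,c)) = 0"
  shows "del_col V (Suc i) = del_col V 0 * relation_col_op n i x"
proof (rule eq_matI)
  let ?C = "relation_col_op n i x"
  have C: "?C \<in> carrier_mat n n" unfolding relation_col_op_def by simp
  have D0: "del_col V 0 \<in> carrier_mat n n" using V unfolding del_col_def by auto
  fix a b assume "a < dim_row (del_col V 0 * ?C)" "b < dim_col (del_col V 0 * ?C)"
  then have a: "a < n" and b: "b < n" using D0 C by auto
  have prod: "(del_col V 0 * ?C) $$ (a,b) = (\<Sum>k<n. V $$ (a, Suc k) * ?C $$ (k,b))"
    using index_mult_mat_sum[OF D0 C a b] a V by (auto simp: del_col_def intro!: sum.cong)
  show "del_col V (Suc i) $$ (a,b) = (del_col V 0 * ?C) $$ (a,b)"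
  proof (cases "b = 0")
    case True
    have "x 0 * V $$ (a,0) + (\<Sum>k<n. x (Suc k) * V $$ (a, Suc k)) = 0"
      using rel[OF a] sum.lessThan_Suc_shift[of "\<lambda>c. x c * V $$ (a,c)" n]
      by (simp add: lessThan_Suc_atMost)
    then have "(\<Sum>k<n. x (Suc k) * V $$ (a, Suc k)) = - (x 0 * V $$ (a,0))"
      by (simp add: add_eq_0_iff)
    moreover have "(\<Sum>k<n. V $$ (a, Suc k) * ?C $$ (k,b)) = - (\<Sum>k<n. x (Suc k) * V $$ (a, Suc k)) / x 0"
      using True by (simp add: relation_col_op_def sum_divide_distrib sum_negf mult_ac)
    ultimately have "(\<Sum>k<n. V $$ (a, Suc k) * ?C $$ (k,b)) = V $$ (a,0)"
      using x0 by simp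
    then show ?thesis using True a b V prod by (simp add: del_col_def)
  next
    case False
    let ?k = "if b \<le> i then b - 1 else b"
    have "(\<Sum>k<n. V $$ (a, Suc k) * ?C $$ (k,b)) = (\<Sum>k<n. if k = ?k then V $$ (a, Suc k) else 0)"
      using False b by (intro sum.cong) (auto simp: relation_col_op_def)
    also have "\<dots> = V $$ (a, Suc ?k)"
      using b by auto
    finally show ?thesis using False a b V prod by (auto simp: del_col_def)
  qed
qed (use V in \<open>auto simp: del_col_def relation_col_op_def\<close>)

lemma det_relation_col_op:
  assumes i: "i < n"
  shows "det (relation_col_op n i x) = (-1) ^ i * (- x (Suc i) / x 0)"
proof -
  let ?C = "relation_col_op n i x"
  have C: "?C \<in> carrier_mat n n" unfolding relation_col_op_def by simp
  have minor: "mat_delete ?C i 0 = 1\<^sub>m (n - 1)"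
    by (rule eq_matI) (use i in \<open>auto simp: mat_delete_def relation_col_op_def\<close>)
  have "det ?C = (\<Sum>b<n. ?C $$ (i,b) * cofactor ?C i b)"
    by (rule laplace_expansion_row[OF C i])
  also have "\<dots> = ?C $$ (i,0) * cofactor ?C i 0"
    using i by (subst sum.remove[of _ 0])
      (auto simp: relation_col_op_def split: if_splits intro!: sum.neutral)
  also have "\<dots> = (-1) ^ i * (- x (Suc i) / x 0)"
    using i unfolding cofactor_def minor by (simp add: relation_col_op_def)
  finally show ?thesis .
qed

lemma det_del_col_Suc_of_relation:
  fixes V :: "'a::field mat" and x :: "nat \<Rightarrow> 'a"
  assumes V: "V \<in> carrier_mat n (Suc n)" and x0: "x 0 \<noteq> 0"
    and rel: "\<And>j. j < n \<Longrightarrow> (\<Sum>c\<le>n. x c * V $$ (j,c)) = 0" and i: "i < n"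
  shows "x 0 * det (del_col V (Suc i)) = (-1) ^ Suc i * x (Suc i) * det (del_col V 0)"
proof -
  have D0: "del_col V 0 \<in> carrier_mat n n" using V unfolding del_col_def by auto
  have C: "relation_col_op n i x \<in> carrier_mat n n" unfolding relation_col_op_def by simp
  have "det (del_col V (Suc i)) = det (del_col V 0) * ((-1) ^ i * (- x (Suc i) / x 0))"
    using del_col_Suc_eq_mult_relation_col_op[OF V x0 rel, of i] det_mult[OF D0 C]
    by (simp add: det_relation_col_op[OF i])
  then show ?thesis using x0 by (simp add: field_simps)
qed

lemma F_admissible_relation:
  assumes "F_admissible n V" "j < n"
  shows "(\<Sum>i<n. \<bar>Vdet V (Suc i)\<bar> * V $$ (j, Suc i)) = - (\<bar>Vdet V 0\<bar> * V $$ (j,0))"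
  using assms sum.lessThan_Suc_shift[of "\<lambda>c. \<bar>Vdet V c\<bar> * V $$ (j,c)" n]
  unfolding F_admissible_def lessThan_Suc_atMost by simp

section \<open>The adjugate of a nonsingular integer matrix\<close>

lemma det_W_hat_eq:
  assumes W: "W \<in> carrier_mat n n" and "det W \<noteq> 0"
  shows "det (W_hat W) = (\<Prod>i<n. rat_of_int \<bar>det W\<bar> / rat_of_int (row_gcd_adj W i)) / rat_of_int (det W)"
proof -
  let ?Wq = "map_mat rat_of_int W"
  have inv: "inv_mat ?Wq \<in> carrier_mat n n"
    using inv_mat_of_int[OF assms] adj_mat(1)[OF W] by auto
  have "rat_of_int (det W) * det (inv_mat ?Wq) = det (?Wq * inv_mat ?Wq)"
    using det_mult[OF _ inv, of ?Wq] W by simp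
  also have "?Wq * inv_mat ?Wq = 1\<^sub>m n"
    unfolding inv_mat_of_int[OF assms] by (rule of_int_mult_scaled_adj[OF assms])
  finally have "det (inv_mat ?Wq) = 1 / rat_of_int (det W)" using assms(2) by (simp add: field_simps)
  moreover have "det (W_hat W) = det (mat_diag n (\<lambda>i. rat_of_int \<bar>det W\<bar> / rat_of_int (row_gcd_adj W i)))
      * det (inv_mat ?Wq)"
    unfolding W_hat_def using W by (simp add: det_mult[OF mat_diag_dim inv])
  ultimately show ?thesis by (simp add: det_mat_diag)
qed

locale nonsingular_int_mat =
  fixes n :: nat and W :: "int mat"
  assumes W_carrier: "W \<in> carrier_mat n n" and det_W_nonzero: "det W \<noteq> 0" and n_pos: "0 < n"
begin

definition adj_gcd :: int where
  "adj_gcd = Gcd {adj_mat W $$ (i,j) | i j. i < n \<and> j < n}"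

definition adj_col_sums :: "int vec" where
  "adj_col_sums = vec n (\<lambda>j. \<Sum>i<n. adj_mat W $$ (i,j))"

definition delta :: int where
  "delta = \<bar>det W\<bar> div adj_gcd"

definition hat_diag :: "nat \<Rightarrow> int" where
  "hat_diag i = \<bar>det W\<bar> div row_gcd_adj W i"

text \<open>The matrix U of the proof idea; the sign makes U^T W = diag(hat_diag) positive.\<close>
definition adj_prim :: "int mat" where
  "adj_prim = mat n n (\<lambda>(j,i). sgn (det W) * (adj_mat W $$ (i,j) div row_gcd_adj W i))"

definition hat_det :: int where
  "hat_det = \<bar>det adj_prim\<bar>"

lemma adj_carrier: "adj_mat W \<in> carrier_mat n n"
  using adj_mat(1)[OF W_carrier] .

lemma adj_mult_W_sum:
  assumes "i < n" "j < n"
  shows "(\<Sum>k<n. adj_mat W $$ (i,k) * W $$ (k,j)) = (if i = j then det W else 0)"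
proof -
  have "(adj_mat W * W) $$ (i,j) = (\<Sum>k<n. adj_mat W $$ (i,k) * W $$ (k,j))"
    by (rule index_mult_mat_sum[OF adj_carrier W_carrier assms])
  then show ?thesis using adj_mat(3)[OF W_carrier] assms by auto
qed

lemma W_mult_adj_sum:
  assumes "i < n" "j < n"
  shows "(\<Sum>k<n. W $$ (i,k) * adj_mat W $$ (k,j)) = (if i = j then det W else 0)"
proof -
  have "(W * adj_mat W) $$ (i,j) = (\<Sum>k<n. W $$ (i,k) * adj_mat W $$ (k,j))"
    by (rule index_mult_mat_sum[OF W_carrier adj_carrier assms])
  then show ?thesis using adj_mat(2)[OF W_carrier] assms by auto
qed

lemma sgn_det_W_mult: "sgn (det W) * det W = \<bar>det W\<bar>"
  by (simp add: abs_sgn)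

lemma row_gcd_dvd_adj: "i < n \<Longrightarrow> j < n \<Longrightarrow> row_gcd_adj W i dvd adj_mat W $$ (i,j)"
  unfolding row_gcd_adj_def using W_carrier by (intro Gcd_dvd) auto

lemma row_gcd_dvd_det:
  assumes i: "i < n" shows "row_gcd_adj W i dvd det W"
proof -
  have "row_gcd_adj W i dvd (\<Sum>k<n. adj_mat W $$ (i,k) * W $$ (k,i))"
    using row_gcd_dvd_adj[OF i] by (intro dvd_sum dvd_mult2) auto
  then show ?thesis using adj_mult_W_sum[OF i i] by simp
qed

lemma row_gcd_pos:
  assumes i: "i < n" shows "row_gcd_adj W i > 0"
proof -
  have "row_gcd_adj W i \<noteq> 0"
  proof
    assume "row_gcd_adj W i = 0"
    then have "\<forall>k<n. adj_mat W $$ (i,k) = 0" using row_gcd_dvd_adj[OF i] by auto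
    then show False using adj_mult_W_sum[OF i i] det_W_nonzero by simp
  qed
  then show ?thesis unfolding row_gcd_adj_def by (simp add: order_less_le)
qed

lemma adj_gcd_dvd_adj: "i < n \<Longrightarrow> j < n \<Longrightarrow> adj_gcd dvd adj_mat W $$ (i,j)"
  unfolding adj_gcd_def by (intro Gcd_dvd) auto

lemma adj_gcd_dvd_row_gcd: "i < n \<Longrightarrow> adj_gcd dvd row_gcd_adj W i"
  unfolding row_gcd_adj_def using W_carrier adj_gcd_dvd_adj by (intro Gcd_greatest) auto

lemma adj_gcd_pos: "adj_gcd > 0"
proof -
  have "adj_gcd \<noteq> 0" using adj_gcd_dvd_row_gcd[OF n_pos] row_gcd_pos[OF n_pos] by auto
  then show ?thesis unfolding adj_gcd_def by (simp add: order_less_le)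
qed

lemma adj_gcd_mult_delta: "adj_gcd * delta = \<bar>det W\<bar>"
  using dvd_trans[OF adj_gcd_dvd_row_gcd[OF n_pos] row_gcd_dvd_det[OF n_pos]]
  unfolding delta_def by simp

lemma delta_pos: "delta > 0"
  using adj_gcd_mult_delta adj_gcd_pos det_W_nonzero by (metis zero_less_abs_iff zero_less_mult_pos)

lemma row_gcd_mult_hat_diag: "i < n \<Longrightarrow> row_gcd_adj W i * hat_diag i = \<bar>det W\<bar>"
  unfolding hat_diag_def using row_gcd_dvd_det by simp

lemma hat_diag_pos: "i < n \<Longrightarrow> hat_diag i > 0"
  using row_gcd_mult_hat_diag row_gcd_pos det_W_nonzero by (metis zero_less_abs_iff zero_less_mult_pos)

lemma adj_prim_carrier: "adj_prim \<in> carrier_mat n n"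
  unfolding adj_prim_def by simp

lemma row_gcd_mult_adj_prim:
  assumes "i < n" "j < n"
  shows "row_gcd_adj W i * adj_prim $$ (j,i) = sgn (det W) * adj_mat W $$ (i,j)"
  using assms row_gcd_dvd_adj[OF assms] unfolding adj_prim_def by (auto simp: algebra_simps)

lemma transpose_adj_prim_mult_W: "transpose_mat adj_prim * W = mat_diag n hat_diag"
proof (rule eq_matI)
  fix i m assume "i < dim_row (mat_diag n hat_diag)" "m < dim_col (mat_diag n hat_diag)"
  then have i: "i < n" and m: "m < n" by (auto simp: mat_diag_def)
  have "(transpose_mat adj_prim * W) $$ (i,m) = (\<Sum>j<n. adj_prim $$ (j,i) * W $$ (j,m))"
    using index_mult_mat_sum[of "transpose_mat adj_prim" n n W n i m] adj_prim_carrier W_carrier i m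
    by (auto intro!: sum.cong)
  then have "row_gcd_adj W i * (transpose_mat adj_prim * W) $$ (i,m)
      = sgn (det W) * (\<Sum>j<n. adj_mat W $$ (i,j) * W $$ (j,m))"
    using i by (simp add: sum_distrib_left mult.assoc[symmetric] row_gcd_mult_adj_prim)
  also have "\<dots> = row_gcd_adj W i * mat_diag n hat_diag $$ (i,m)"
    using i m row_gcd_mult_hat_diag by (simp add: adj_mult_W_sum mat_diag_def sgn_det_W_mult)
  finally show "(transpose_mat adj_prim * W) $$ (i,m) = mat_diag n hat_diag $$ (i,m)"
    using row_gcd_pos[OF i] by simp
qed (use adj_prim_carrier W_carrier in \<open>auto simp: mat_diag_def\<close>)

lemma det_adj_prim_mult_det_W: "det adj_prim * det W = (\<Prod>i<n. hat_diag i)"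
  using arg_cong[OF transpose_adj_prim_mult_W, of det] adj_prim_carrier W_carrier
  by (simp add: det_mult[of _ n] det_transpose det_mat_diag)

lemma hat_det_mult_abs_det_W: "hat_det * \<bar>det W\<bar> = (\<Prod>i<n. hat_diag i)"
proof -
  have "(\<Prod>i<n. hat_diag i) > 0" using hat_diag_pos by (intro prod_pos) auto
  then show ?thesis
    using arg_cong[OF det_adj_prim_mult_det_W, of abs] unfolding hat_det_def by (simp add: abs_mult)
qed

lemma hat_det_pos: "hat_det > 0"
proof -
  have "(\<Prod>i<n. hat_diag i) > 0" using hat_diag_pos by (intro prod_pos) auto
  then show ?thesis
    using hat_det_mult_abs_det_W unfolding hat_det_def by (metis abs_ge_zero order_less_le mult_zero_left)
qed

lemma abs_det_W_hat: "\<bar>det (W_hat W)\<bar> = rat_of_int hat_det"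
proof -
  have "rat_of_int \<bar>det W\<bar> / rat_of_int (row_gcd_adj W i) = rat_of_int (hat_diag i)" if "i < n" for i
    using row_gcd_mult_hat_diag[OF that] row_gcd_pos[OF that]
    by (simp add: field_simps flip: of_int_mult)
  then have "det (W_hat W) = rat_of_int (\<Prod>i<n. hat_diag i) / rat_of_int (det W)"
    by (simp add: det_W_hat_eq[OF W_carrier det_W_nonzero])
  also have "\<dots> = rat_of_int (det adj_prim)"
    using det_W_nonzero by (simp flip: det_adj_prim_mult_det_W)
  finally show ?thesis unfolding hat_det_def by simp
qed

lemma transpose_W_mult_vec_index:
  assumes "c \<in> carrier_vec n" "i < n"
  shows "(transpose_mat W *\<^sub>v c) $ i = (\<Sum>k<n. W $$ (k,i) * c $ k)"
  using assms W_carrier by (auto simp: scalar_prod_def lessThan_atLeast0 intro!: sum.cong)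

lemma transpose_W_mult_index:
  assumes "M \<in> carrier_mat n k" "i < n" "c < k"
  shows "(transpose_mat W * M) $$ (i,c) = (\<Sum>j<n. W $$ (j,i) * M $$ (j,c))"
  using index_mult_mat_sum[of "transpose_mat W" n n M k i c] assms W_carrier by auto

lemma transpose_W_mult_adj_col_sums:
  assumes i: "i < n"
  shows "(\<Sum>k<n. W $$ (k,i) * adj_col_sums $ k) = det W"
proof -
  have "(\<Sum>k<n. W $$ (k,i) * adj_col_sums $ k) = (\<Sum>k<n. \<Sum>m<n. adj_mat W $$ (m,k) * W $$ (k,i))"
    by (simp add: adj_col_sums_def sum_distrib_left mult.commute)
  also have "\<dots> = (\<Sum>m<n. \<Sum>k<n. adj_mat W $$ (m,k) * W $$ (k,i))"
    by (rule sum.swap)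
  also have "\<dots> = det W" using i by (simp add: adj_mult_W_sum)
  finally show ?thesis .
qed

lemma adj_mult_transpose_W_mult_vec:
  assumes c: "c \<in> carrier_vec n" and j: "j < n"
  shows "(\<Sum>i<n. adj_mat W $$ (i,j) * (transpose_mat W *\<^sub>v c) $ i) = det W * c $ j"
proof -
  have "(\<Sum>i<n. adj_mat W $$ (i,j) * (transpose_mat W *\<^sub>v c) $ i)
      = (\<Sum>i<n. \<Sum>k<n. c $ k * (W $$ (k,i) * adj_mat W $$ (i,j)))"
    by (simp add: transpose_W_mult_vec_index[OF c] sum_distrib_left mult_ac)
  also have "\<dots> = (\<Sum>k<n. c $ k * (\<Sum>i<n. W $$ (k,i) * adj_mat W $$ (i,j)))"
    by (subst sum.swap) (simp add: sum_distrib_left)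
  also have "\<dots> = det W * c $ j" using j by (simp add: W_mult_adj_sum if_distrib mult.commute cong: if_cong)
  finally show ?thesis .
qed

lemma lattice_of_col_sums_dvd:
  assumes "\<And>j. j < n \<Longrightarrow> hat_det * adj_gcd dvd adj_col_sums $ j"
  shows "hat_det dvd delta \<and>
    (\<exists>c \<in> carrier_vec n. transpose_mat W *\<^sub>v c = vec n (\<lambda>_. delta div hat_det))"
proof -
  have "\<forall>j<n. \<exists>k. adj_col_sums $ j = hat_det * adj_gcd * k" using assms unfolding dvd_def by blast
  then obtain k where k: "\<And>j. j < n \<Longrightarrow> adj_col_sums $ j = hat_det * adj_gcd * k j"
    by metis
  define c where "c = vec n (\<lambda>j. sgn (det W) * k j)"
  have c: "c \<in> carrier_vec n" unfolding c_def by simp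
  have Wc: "hat_det * (transpose_mat W *\<^sub>v c) $ i = delta" if i: "i < n" for i
  proof -
    have "(transpose_mat W *\<^sub>v c) $ i = sgn (det W) * (\<Sum>m<n. W $$ (m,i) * k m)"
      unfolding transpose_W_mult_vec_index[OF c i] by (auto simp: c_def sum_distrib_left mult_ac)
    then have "adj_gcd * (hat_det * (transpose_mat W *\<^sub>v c) $ i)
        = sgn (det W) * (\<Sum>m<n. W $$ (m,i) * adj_col_sums $ m)"
      by (simp add: k sum_distrib_left mult_ac)
    also have "\<dots> = adj_gcd * delta"
      by (simp add: transpose_W_mult_adj_col_sums[OF i] sgn_det_W_mult adj_gcd_mult_delta)
    finally show ?thesis using adj_gcd_pos by simp
  qed
  then have "hat_det dvd delta" using n_pos by (metis dvd_triv_left)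
  moreover have "transpose_mat W *\<^sub>v c = vec n (\<lambda>_. delta div hat_det)"
    using Wc hat_det_pos W_carrier by (intro eq_vecI) (auto simp flip: Wc)
  ultimately show ?thesis using c by blast
qed

lemma col_sums_dvd_of_lattice:
  assumes c: "c \<in> carrier_vec n" and Wc: "transpose_mat W *\<^sub>v c = vec n (\<lambda>_. d)"
    and delta: "delta = hat_det * d" and j: "j < n"
  shows "hat_det * adj_gcd dvd adj_col_sums $ j"
proof -
  have d: "d \<noteq> 0" using delta delta_pos by auto
  have "d * adj_col_sums $ j = det W * c $ j"
    using adj_mult_transpose_W_mult_vec[OF c j] j by (simp add: Wc adj_col_sums_def sum_distrib_left mult_ac)
  also have "det W = sgn (det W) * (adj_gcd * delta)"
    by (simp add: adj_gcd_mult_delta sgn_mult_abs)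
  finally have "d * adj_col_sums $ j = d * (hat_det * adj_gcd * (sgn (det W) * c $ j))"
    by (simp add: delta mult_ac)
  then show ?thesis using d by simp
qed

lemma col_sums_dvd_iff_lattice:
  "(\<forall>j<n. hat_det * adj_gcd dvd adj_col_sums $ j) \<longleftrightarrow>
     hat_det dvd delta \<and>
     (\<exists>c \<in> carrier_vec n. transpose_mat W *\<^sub>v c = vec n (\<lambda>_. delta div hat_det))"
  using lattice_of_col_sums_dvd col_sums_dvd_of_lattice hat_det_pos by auto

end

section \<open>Column sums of the adjugate of a P-admissible matrix\<close>

locale P_admissible_witness = nonsingular_int_mat +
  fixes V :: "int mat"
  assumes F_adm: "F_admissible n V" and W_eq: "map_mat rat_of_int W = weighted_transverse n V"
begin

abbreviation Q :: "nat \<Rightarrow> int" where "Q j \<equiv> \<bar>Vdet V j\<bar>"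
abbreviation dQ :: int where "dQ \<equiv> deltaQ n V"
abbreviation A :: "int mat" where "A \<equiv> V0 V"

lemma V_carrier: "V \<in> carrier_mat n (Suc n)"
  using F_adm unfolding F_admissible_def by auto

lemma A_carrier: "A \<in> carrier_mat n n"
  using V_carrier unfolding V0_def del_col_def by auto

lemma A_entry: "j < n \<Longrightarrow> i < n \<Longrightarrow> A $$ (j,i) = V $$ (j, Suc i)"
  using V_carrier unfolding V0_def del_col_def by auto

lemma Q_0: "Q 0 = \<bar>det A\<bar>"
  unfolding V0_def Vdet_def ..

lemma Q_pos: "j \<le> n \<Longrightarrow> Q j > 0"
  using F_adm unfolding F_admissible_def by auto

lemma det_A_nonzero: "det A \<noteq> 0"
  using Q_pos[of 0] Q_0 by simp

lemma dQ_pos: "dQ > 0"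
proof -
  have "dQ \<noteq> 0" unfolding deltaQ_def using Q_pos by (subst Lcm_0_iff) auto
  moreover have "dQ \<ge> 0" unfolding deltaQ_def by simp
  ultimately show ?thesis by linarith
qed

lemma transpose_A_mult_W_rat:
  "transpose_mat (map_mat rat_of_int A) * map_mat rat_of_int W
     = mat_diag n (\<lambda>i. rat_of_int dQ / rat_of_int (Q (Suc i)))"
proof -
  let ?Aq = "map_mat rat_of_int A"
    and ?M = "rat_of_int dQ \<cdot>\<^sub>m mat_diag n (\<lambda>k. 1 / rat_of_int (Q (Suc k)))"
  have Aq: "?Aq \<in> carrier_mat n n" using A_carrier by simp
  have inv: "inv_mat ?Aq \<in> carrier_mat n n"
    using inv_mat_of_int[OF A_carrier det_A_nonzero] adj_mat(1)[OF A_carrier] by simp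
  have "inv_mat ?Aq * ?Aq = 1\<^sub>m n"
    using mat_mult_left_right_inverse[OF Aq inv] of_int_mult_scaled_adj[OF A_carrier det_A_nonzero]
    by (simp add: inv_mat_of_int[OF A_carrier det_A_nonzero])
  then have "transpose_mat ?Aq * star_mat ?Aq = 1\<^sub>m n"
    unfolding star_mat_def using transpose_mult[OF inv Aq] by simp
  moreover have "transpose_mat ?Aq * (star_mat ?Aq * ?M) = (transpose_mat ?Aq * star_mat ?Aq) * ?M"
    using Aq inv unfolding star_mat_def by (auto intro: assoc_mult_mat[symmetric, of _ n n _ n _ n])
  ultimately have "transpose_mat ?Aq * (star_mat ?Aq * ?M) = ?M"
    using left_mult_one_mat[of ?M n n] by simp
  also have "?M = mat_diag n (\<lambda>i. rat_of_int dQ / rat_of_int (Q (Suc i)))"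
    by (rule eq_matI) (auto simp: mat_diag_def)
  finally show ?thesis
    unfolding W_eq weighted_transverse_def by simp
qed

lemma diag_Q_mult_transpose_A_mult_W:
  "mat_diag n (\<lambda>i. Q (Suc i)) * (transpose_mat A * W) = dQ \<cdot>\<^sub>m 1\<^sub>m n"
proof (rule of_int_hom.mat_hom_inj)
  have Q: "rat_of_int (Q (Suc i)) \<noteq> 0" if "i < n" for i using Q_pos[of "Suc i"] that by simp
  have "map_mat rat_of_int (mat_diag n (\<lambda>i. Q (Suc i)) * (transpose_mat A * W))
      = mat_diag n (\<lambda>i. rat_of_int (Q (Suc i))) *
          (transpose_mat (map_mat rat_of_int A) * map_mat rat_of_int W)"
    using A_carrier W_carrier
    by (simp add: of_int_hom.mat_hom_mult[of _ n n _ n] map_mat_transpose map_mat_of_int_mat_diag)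
  also have "\<dots> = mat_diag n (\<lambda>i. rat_of_int dQ)"
    unfolding transpose_A_mult_W_rat mat_diag_diag using Q by (intro eq_matI) (auto simp: mat_diag_def)
  finally show "map_mat rat_of_int (mat_diag n (\<lambda>i. Q (Suc i)) * (transpose_mat A * W))
      = map_mat rat_of_int (dQ \<cdot>\<^sub>m 1\<^sub>m n)"
    by (auto intro!: eq_matI simp: mat_diag_def)
qed

text \<open>Adj W = det W \<cdot> W^-1 with W^-1 = diag(Q (i+1) / dQ) A^T.\<close>
lemma dQ_mult_adj:
  assumes i: "i < n" and k: "k < n"
  shows "dQ * adj_mat W $$ (i,k) = det W * (Q (Suc i) * A $$ (k,i))"
proof -
  let ?D = "mat_diag n (\<lambda>i. Q (Suc i))" and ?At = "transpose_mat A"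
  have At: "?At \<in> carrier_mat n n" using A_carrier by simp
  have "dQ \<cdot>\<^sub>m adj_mat W = (?D * (?At * W)) * adj_mat W"
    unfolding diag_Q_mult_transpose_A_mult_W using adj_carrier
    by (simp add: mult_smult_assoc_mat[of _ n n _ n])
  also have "\<dots> = ?D * (?At * (W * adj_mat W))"
    using At W_carrier adj_carrier by (simp add: assoc_mult_mat[of _ n n _ n _ n])
  also have "\<dots> = det W \<cdot>\<^sub>m (?D * ?At)"
    using At adj_mat(2)[OF W_carrier]
    by (simp add: mult_smult_distrib[of _ n n _ n])
  finally have "(dQ \<cdot>\<^sub>m adj_mat W) $$ (i,k) = (det W \<cdot>\<^sub>m (?D * ?At)) $$ (i,k)" by simp
  then show ?thesis
    using i k At adj_carrier by (simp add: mat_diag_mult_left[OF At])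
qed

definition col_gcd :: "nat \<Rightarrow> int" where
  "col_gcd i = Gcd ((\<lambda>j. A $$ (j,i)) ` {..<n})"

definition weighted_gcd :: int where
  "weighted_gcd = Gcd ((\<lambda>(i,j). Q (Suc i) * A $$ (j,i)) ` ({..<n} \<times> {..<n}))"

lemma dQ_mult_row_gcd: "i < n \<Longrightarrow> dQ * row_gcd_adj W i = \<bar>det W\<bar> * Q (Suc i) * col_gcd i"
proof -
  assume i: "i < n"
  have "{adj_mat W $$ (i,j) | j. j < dim_col W} = (\<lambda>j. adj_mat W $$ (i,j)) ` {..<n}"
    using W_carrier by auto
  then have "dQ * row_gcd_adj W i = Gcd ((\<lambda>j. dQ * adj_mat W $$ (i,j)) ` {..<n})"
    unfolding row_gcd_adj_def using dQ_pos by (simp add: Gcd_image_mult_int)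
  also have "\<dots> = Gcd ((\<lambda>j. (det W * Q (Suc i)) * A $$ (j,i)) ` {..<n})"
    using dQ_mult_adj[OF i] by (simp add: mult.assoc)
  finally show ?thesis unfolding col_gcd_def by (simp add: Gcd_image_mult_int abs_mult)
qed

lemma dQ_mult_adj_gcd: "dQ * adj_gcd = \<bar>det W\<bar> * weighted_gcd"
proof -
  have "{adj_mat W $$ (i,j) | i j. i < n \<and> j < n} = (\<lambda>(i,j). adj_mat W $$ (i,j)) ` ({..<n} \<times> {..<n})"
    by auto
  then have "dQ * adj_gcd = Gcd ((\<lambda>(i,j). dQ * adj_mat W $$ (i,j)) ` ({..<n} \<times> {..<n}))"
    unfolding adj_gcd_def using dQ_pos Gcd_image_mult_int[of dQ "\<lambda>(i,j). adj_mat W $$ (i,j)"]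
    by (simp add: case_prod_beta')
  also have "\<dots> = Gcd ((\<lambda>(i,j). det W * (Q (Suc i) * A $$ (j,i))) ` ({..<n} \<times> {..<n}))"
    by (intro arg_cong[where f = Gcd] image_cong) (auto simp: dQ_mult_adj)
  finally show ?thesis
    unfolding weighted_gcd_def
    using Gcd_image_mult_int[of "det W" "\<lambda>(i,j). Q (Suc i) * A $$ (j,i)"]
    by (simp add: case_prod_beta')
qed

lemma col_gcd_pos: "i < n \<Longrightarrow> col_gcd i > 0"
proof -
  assume i: "i < n"
  have "dQ * row_gcd_adj W i \<noteq> 0" using dQ_pos row_gcd_pos[OF i] by simp
  then have "col_gcd i \<noteq> 0" unfolding dQ_mult_row_gcd[OF i] by auto
  moreover have "col_gcd i \<ge> 0" unfolding col_gcd_def by simp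
  ultimately show ?thesis by linarith
qed

lemma hat_diag_mult_Q_mult_col_gcd:
  assumes i: "i < n" shows "hat_diag i * Q (Suc i) * col_gcd i = dQ"
proof -
  have "row_gcd_adj W i * (hat_diag i * Q (Suc i) * col_gcd i)
      = (row_gcd_adj W i * hat_diag i) * Q (Suc i) * col_gcd i"
    by (simp only: mult.assoc)
  also have "\<dots> = row_gcd_adj W i * dQ"
    by (simp add: row_gcd_mult_hat_diag[OF i] dQ_mult_row_gcd[OF i] mult_ac)
  finally show ?thesis using row_gcd_pos[OF i] by simp
qed

lemma abs_det_W_mult_abs_det_A: "\<bar>det W\<bar> * \<bar>det A\<bar> * (\<Prod>i<n. Q (Suc i)) = dQ ^ n"
proof -
  have "det (mat_diag n (\<lambda>i. Q (Suc i)) * (transpose_mat A * W)) = dQ ^ n"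
    unfolding diag_Q_mult_transpose_A_mult_W by simp
  then have "(\<Prod>i<n. Q (Suc i)) * (det A * det W) = dQ ^ n"
    using A_carrier W_carrier
    by (simp add: det_mult[of _ n] det_transpose det_mat_diag)
  then show ?thesis using dQ_pos
    by (metis (no_types) abs_mult abs_of_pos abs_prod mult.commute mult.left_commute zero_less_power
        abs_abs)
qed

lemma hat_det_mult_col_gcds: "hat_det * (\<Prod>i<n. col_gcd i) = \<bar>det A\<bar>"
proof -
  have "\<bar>det W\<bar> * (hat_det * (\<Prod>i<n. col_gcd i)) * (\<Prod>i<n. Q (Suc i))
      = (\<Prod>i<n. hat_diag i) * (\<Prod>i<n. col_gcd i) * (\<Prod>i<n. Q (Suc i))"
    by (simp flip: hat_det_mult_abs_det_W add: mult_ac)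
  also have "\<dots> = (\<Prod>i<n. hat_diag i * Q (Suc i) * col_gcd i)"
    by (simp add: prod.distrib mult_ac)
  also have "\<dots> = \<bar>det W\<bar> * \<bar>det A\<bar> * (\<Prod>i<n. Q (Suc i))"
    by (simp add: hat_diag_mult_Q_mult_col_gcd abs_det_W_mult_abs_det_A)
  finally show ?thesis
    using det_W_nonzero Q_pos by (simp add: prod_zero_iff)
qed

lemma dQ_mult_adj_col_sums:
  assumes j: "j < n"
  shows "dQ * adj_col_sums $ j = - (det W * Q 0 * V $$ (j,0))"
proof -
  have "dQ * adj_col_sums $ j = det W * (\<Sum>i<n. Q (Suc i) * V $$ (j, Suc i))"
    using j by (simp add: adj_col_sums_def sum_distrib_left dQ_mult_adj A_entry)
  then show ?thesis using F_admissible_relation[OF F_adm j] by simp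
qed

lemma weighted_gcd_dvd: "j < n \<Longrightarrow> weighted_gcd dvd (\<Prod>i<n. col_gcd i) * V $$ (j,0)"
proof (rule dvd_of_dvd_mult_Gcd_one)
  assume j: "j < n"
  show "Gcd (Vdet V ` {0..n}) = 1" using F_adm unfolding F_admissible_def by simp
  fix a assume "a \<in> Vdet V ` {0..n}"
  then obtain m where m: "m \<le> n" and a: "a = Vdet V m" by auto
  have "weighted_gcd dvd \<bar>Vdet V m\<bar> * ((\<Prod>i<n. col_gcd i) * V $$ (j,0))"
  proof (cases m)
    case 0
    have "weighted_gcd dvd (\<Sum>i<n. Q (Suc i) * A $$ (j,i))"
      unfolding weighted_gcd_def using j by (intro dvd_sum Gcd_dvd) force
    then have "weighted_gcd dvd Q 0 * V $$ (j,0)"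
      using j F_admissible_relation[OF F_adm j] by (simp add: A_entry)
    then have "weighted_gcd dvd Q 0 * V $$ (j,0) * (\<Prod>i<n. col_gcd i)" by (rule dvd_mult2)
    then show ?thesis using 0 by (simp add: ac_simps)
  next
    case (Suc i)
    with m have i: "i < n" by simp
    have "weighted_gcd dvd Gcd ((\<lambda>j. Q (Suc i) * A $$ (j,i)) ` {..<n})"
      unfolding weighted_gcd_def using i by (intro Gcd_greatest Gcd_dvd) force
    then have "weighted_gcd dvd Q (Suc i) * col_gcd i"
      unfolding col_gcd_def by (simp add: Gcd_image_mult_int)
    also have "\<dots> dvd Q (Suc i) * (\<Prod>i<n. col_gcd i)"
      using i by (intro mult_dvd_mono dvd_prodI) auto
    finally have "weighted_gcd dvd Q (Suc i) * (\<Prod>i<n. col_gcd i) * V $$ (j,0)" by (rule dvd_mult2)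
    then show ?thesis using Suc by (simp add: ac_simps)
  qed
  then show "weighted_gcd dvd a * ((\<Prod>i<n. col_gcd i) * V $$ (j,0))"
    unfolding a by (cases "Vdet V m \<ge> 0") auto
qed

lemma hat_det_mult_adj_gcd_dvd_adj_col_sums:
  assumes j: "j < n"
  shows "hat_det * adj_gcd dvd adj_col_sums $ j"
proof -
  let ?P = "\<Prod>i<n. col_gcd i"
  obtain t where t: "?P * V $$ (j,0) = weighted_gcd * t"
    using weighted_gcd_dvd[OF j] by blast
  have "dQ * ?P * adj_col_sums $ j = - (det W * \<bar>det A\<bar> * (?P * V $$ (j,0)))"
    using arg_cong[OF dQ_mult_adj_col_sums[OF j], of "\<lambda>x. x * ?P"] Q_0 by (simp add: mult_ac)
  also have "\<dots> = - (sgn (det W) * (\<bar>det W\<bar> * weighted_gcd) * hat_det * ?P * t)"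
    unfolding t hat_det_mult_col_gcds[symmetric] by (simp add: abs_mult_sgn mult_ac)
  also have "\<dots> = dQ * ?P * (hat_det * adj_gcd * (- sgn (det W) * t))"
    unfolding dQ_mult_adj_gcd[symmetric] by (simp add: mult_ac)
  finally have "dQ * ?P * adj_col_sums $ j = dQ * ?P * (hat_det * adj_gcd * (- sgn (det W) * t))" .
  moreover have "?P > 0" using col_gcd_pos by (intro prod_pos) auto
  then have "dQ * ?P > 0" by (rule mult_pos_pos[OF dQ_pos])
  ultimately show ?thesis by (metis dvd_triv_left less_irrefl mult_left_cancel)
qed

end

section \<open>An F-admissible preimage\<close>

locale divisible_col_sums = nonsingular_int_mat +
  assumes col_sums_dvd: "\<And>j. j < n \<Longrightarrow> hat_det * adj_gcd dvd adj_col_sums $ j"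
    and entries_coprime: "Gcd {W $$ (i,j) | i j. i < n \<and> j < n} = 1"
begin

definition row_ratio :: "nat \<Rightarrow> int" where
  "row_ratio i = row_gcd_adj W i div adj_gcd"

text \<open>V = (v_0 | U), with v_0 chosen so that hat_det v_0 + \<Sum> row_ratio i \<cdot> u_i = 0.\<close>
definition preimage :: "int mat" where
  "preimage = mat n (Suc n) (\<lambda>(j,c). if c = 0
     then - (sgn (det W) * (adj_col_sums $ j div (hat_det * adj_gcd))) else adj_prim $$ (j, c - 1))"

lemma adj_gcd_mult_row_ratio: "i < n \<Longrightarrow> adj_gcd * row_ratio i = row_gcd_adj W i"
  unfolding row_ratio_def using adj_gcd_dvd_row_gcd by simp

lemma row_ratio_pos: "i < n \<Longrightarrow> row_ratio i > 0"
  using adj_gcd_mult_row_ratio row_gcd_pos adj_gcd_pos by (metis zero_less_mult_pos)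

lemma delta_eq_row_ratio_mult_hat_diag: "i < n \<Longrightarrow> delta = row_ratio i * hat_diag i"
  using adj_gcd_mult_row_ratio[of i] row_gcd_mult_hat_diag[of i] adj_gcd_mult_delta adj_gcd_pos
  by (metis mult.assoc mult_left_cancel order_less_irrefl)

lemma preimage_carrier: "preimage \<in> carrier_mat n (Suc n)"
  unfolding preimage_def by simp

lemma preimage_Suc: "j < n \<Longrightarrow> i < n \<Longrightarrow> preimage $$ (j, Suc i) = adj_prim $$ (j,i)"
  unfolding preimage_def by simp

lemma hat_det_mult_adj_gcd_mult_preimage_0:
  "j < n \<Longrightarrow> hat_det * adj_gcd * preimage $$ (j,0) = - sgn (det W) * adj_col_sums $ j"
  unfolding preimage_def using col_sums_dvd[of j] by (simp add: mult.assoc[symmetric])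

lemma del_col_preimage_0: "del_col preimage 0 = adj_prim"
  by (rule eq_matI) (use adj_prim_carrier in \<open>auto simp: del_col_def preimage_def\<close>)

lemma preimage_relation:
  assumes j: "j < n"
  shows "hat_det * preimage $$ (j,0) + (\<Sum>i<n. row_ratio i * adj_prim $$ (j,i)) = 0"
proof -
  obtain k where k: "adj_col_sums $ j = hat_det * adj_gcd * k"
    using col_sums_dvd[OF j] by blast
  have "adj_gcd * (\<Sum>i<n. row_ratio i * adj_prim $$ (j,i)) = sgn (det W) * adj_col_sums $ j"
    using j by (simp add: sum_distrib_left mult.assoc[symmetric] adj_gcd_mult_row_ratio
        row_gcd_mult_adj_prim adj_col_sums_def)
  then have "(\<Sum>i<n. row_ratio i * adj_prim $$ (j,i)) = sgn (det W) * hat_det * k"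
    using adj_gcd_pos unfolding k by (simp add: mult_ac)
  then show ?thesis
    using j hat_det_pos adj_gcd_pos by (simp add: preimage_def k)
qed

lemma abs_Vdet_preimage_Suc:
  assumes i: "i < n"
  shows "\<bar>Vdet preimage (Suc i)\<bar> = row_ratio i"
proof -
  let ?x = "\<lambda>c. rat_of_int (if c = 0 then hat_det else row_ratio (c - 1))"
  let ?Vq = "map_mat rat_of_int preimage"
  have rel: "(\<Sum>c\<le>n. ?x c * ?Vq $$ (j,c)) = 0" if j: "j < n" for j
  proof -
    have "(\<Sum>c\<le>n. ?x c * ?Vq $$ (j,c))
        = rat_of_int (hat_det * preimage $$ (j,0) + (\<Sum>i<n. row_ratio i * adj_prim $$ (j,i)))"
      using j sum.lessThan_Suc_shift[of "\<lambda>c. ?x c * ?Vq $$ (j,c)" n]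
      by (simp add: lessThan_Suc_atMost preimage_def)
    then show ?thesis using preimage_relation[OF j] by simp
  qed
  have "?x 0 * det (del_col ?Vq (Suc i)) = (-1) ^ Suc i * ?x (Suc i) * det (del_col ?Vq 0)"
    by (rule det_del_col_Suc_of_relation) (use preimage_carrier hat_det_pos rel i in auto)
  then have "rat_of_int (hat_det * Vdet preimage (Suc i))
      = rat_of_int ((-1) ^ Suc i * row_ratio i * det adj_prim)"
    unfolding del_col_map_mat of_int_hom.hom_det del_col_preimage_0 Vdet_def by simp
  then have "\<bar>hat_det * Vdet preimage (Suc i)\<bar> = \<bar>(-1) ^ Suc i * row_ratio i * det adj_prim\<bar>"
    by (simp only: of_int_eq_iff)
  then have "hat_det * \<bar>Vdet preimage (Suc i)\<bar> = hat_det * row_ratio i"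
    using row_ratio_pos[OF i] hat_det_pos unfolding hat_det_def by (simp add: abs_mult)
  then show ?thesis using hat_det_pos by simp
qed

lemma abs_Vdet_preimage_0: "\<bar>Vdet preimage 0\<bar> = hat_det"
  unfolding Vdet_def del_col_preimage_0 hat_det_def ..

lemma Gcd_Vdet_preimage: "Gcd (Vdet preimage ` {0..n}) = 1"
proof -
  let ?g = "Gcd (Vdet preimage ` {0..n})"
  have "?g * adj_gcd dvd adj_mat W $$ (i,j)" if i: "i < n" and j: "j < n" for i j
  proof -
    have "?g dvd Vdet preimage (Suc i)" using i by (intro Gcd_dvd) auto
    then have "?g dvd row_ratio i" using abs_Vdet_preimage_Suc[OF i] by (metis dvd_abs_iff)
    then have "?g * adj_gcd dvd row_gcd_adj W i"
      using adj_gcd_mult_row_ratio[OF i] by (metis mult.commute mult_dvd_mono dvd_refl)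
    then show ?thesis using row_gcd_dvd_adj[OF i j] by (rule dvd_trans)
  qed
  then have "?g * adj_gcd dvd adj_gcd" unfolding adj_gcd_def by (intro Gcd_greatest) auto
  then have "?g dvd 1" using adj_gcd_pos by (metis dvd_mult_cancel_right mult_1 order_less_irrefl)
  then show ?thesis by simp
qed

lemma F_admissible_preimage: "F_admissible n preimage"
  unfolding F_admissible_def
proof (intro conjI allI impI)
  show "preimage \<in> carrier_mat n (Suc n)" by (rule preimage_carrier)
  show "Gcd (Vdet preimage ` {0..n}) = 1" by (rule Gcd_Vdet_preimage)
next
  fix j assume j: "j \<le> n"
  have "\<bar>Vdet preimage j\<bar> > 0"
  proof (cases j)
    case 0
    then show ?thesis using abs_Vdet_preimage_0 hat_det_pos by simp
  next
    case (Suc i)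
    then show ?thesis using j abs_Vdet_preimage_Suc row_ratio_pos by simp
  qed
  then show "Vdet preimage j \<noteq> 0" by simp
next
  fix j assume j: "j < n"
  have "(\<Sum>c\<le>n. \<bar>Vdet preimage c\<bar> * preimage $$ (j,c))
      = hat_det * preimage $$ (j,0) + (\<Sum>i<n. row_ratio i * adj_prim $$ (j,i))"
    using j sum.lessThan_Suc_shift[of "\<lambda>c. \<bar>Vdet preimage c\<bar> * preimage $$ (j,c)" n]
    by (simp add: lessThan_Suc_atMost abs_Vdet_preimage_0 abs_Vdet_preimage_Suc preimage_Suc)
  then show "(\<Sum>c\<le>n. \<bar>Vdet preimage c\<bar> * preimage $$ (j,c)) = 0"
    using preimage_relation[OF j] by simp
qed

lemma abs_Vdet_preimage_values:
  "(\<lambda>j. \<bar>Vdet preimage j\<bar>) ` {0..n} = insert hat_det (row_ratio ` {..<n})"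
proof -
  have "{0..n} = insert 0 (Suc ` {..<n})"
    by (simp add: atLeast0AtMost lessThan_Suc_atMost[symmetric] lessThan_Suc_eq_insert_0)
  then show ?thesis by (simp add: image_image abs_Vdet_preimage_0 abs_Vdet_preimage_Suc)
qed

lemma deltaQ_preimage_dvd_delta: "deltaQ n preimage dvd delta"
  unfolding deltaQ_def abs_Vdet_preimage_values
  using col_sums_dvd_iff_lattice col_sums_dvd delta_eq_row_ratio_mult_hat_diag
  by (intro Lcm_least) auto

lemma transpose_W_mult_preimage_0:
  assumes i: "i < n" shows "hat_det * (transpose_mat W * preimage) $$ (i,0) = - delta"
proof -
  have "hat_det * adj_gcd * (transpose_mat W * preimage) $$ (i,0)
      = - sgn (det W) * (\<Sum>j<n. W $$ (j,i) * adj_col_sums $ j)"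
    using i preimage_carrier
    by (simp add: transpose_W_mult_index sum_distrib_left hat_det_mult_adj_gcd_mult_preimage_0
        mult.left_commute[of _ "W $$ _"])
  also have "\<dots> = adj_gcd * (- delta)"
    by (simp add: transpose_W_mult_adj_col_sums[OF i] sgn_det_W_mult adj_gcd_mult_delta)
  finally have "adj_gcd * (hat_det * (transpose_mat W * preimage) $$ (i,0)) = adj_gcd * (- delta)"
    by (simp add: mult_ac)
  then show ?thesis using adj_gcd_pos by (subst (asm) mult_left_cancel) auto
qed

lemma transpose_W_mult_preimage_Suc:
  assumes i: "i < n" and c: "c < n"
  shows "(transpose_mat W * preimage) $$ (i, Suc c) = (if c = i then hat_diag c else 0)"
proof -
  have "(transpose_mat W * preimage) $$ (i, Suc c) = (\<Sum>j<n. adj_prim $$ (j,c) * W $$ (j,i))"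
    using i c preimage_carrier by (simp add: transpose_W_mult_index preimage_Suc mult.commute)
  also have "\<dots> = (transpose_mat adj_prim * W) $$ (c,i)"
    using index_mult_mat_sum[of "transpose_mat adj_prim" n n W n c i] adj_prim_carrier W_carrier i c
    by (auto intro!: sum.cong)
  also have "\<dots> = (if c = i then hat_diag c else 0)"
    using i c by (simp add: transpose_adj_prim_mult_W mat_diag_def)
  finally show ?thesis .
qed

text \<open>Writing delta = deltaQ \<cdot> m, the factor m divides every entry of W^T V, hence every
  entry of W, which is primitive.\<close>
lemma delta_dvd_deltaQ_preimage: "delta dvd deltaQ n preimage"
proof -
  let ?L = "deltaQ n preimage"
  obtain m where m: "delta = ?L * m" using deltaQ_preimage_dvd_delta by blast
  have entries: "m dvd (transpose_mat W * preimage) $$ (i,c)" if i: "i < n" and c: "c < Suc n" for i c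
  proof (cases c)
    case 0
    have "hat_det dvd ?L" unfolding deltaQ_def abs_Vdet_preimage_values by (rule dvd_Lcm) simp
    then obtain t where "?L = hat_det * t" ..
    then have "hat_det * - (transpose_mat W * preimage) $$ (i,c) = hat_det * (t * m)"
      using transpose_W_mult_preimage_0[OF i] m 0 by (simp add: mult_ac)
    then have "- (transpose_mat W * preimage) $$ (i,c) = t * m"
      using hat_det_pos by (subst (asm) mult_left_cancel) auto
    then show ?thesis by (metis dvd_minus_iff dvd_triv_right)
  next
    case (Suc c')
    with c have c': "c' < n" by simp
    have "row_ratio c' dvd ?L" unfolding deltaQ_def abs_Vdet_preimage_values using c' by (intro dvd_Lcm) simp
    then obtain t where "?L = row_ratio c' * t" ..
    then have "row_ratio c' * hat_diag c' = row_ratio c' * (t * m)"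
      using delta_eq_row_ratio_mult_hat_diag[OF c'] m by (simp only: mult.assoc)
    then have "hat_diag c' = t * m" using row_ratio_pos[OF c'] by simp
    then show ?thesis using Suc i c' by (auto simp: transpose_W_mult_preimage_Suc)
  qed
  have "m dvd W $$ (i,j)" if "i < n" "j < n" for i j
    using dvd_entries_of_dvd_mult[of "transpose_mat W" n n preimage m j i] W_carrier preimage_carrier
      Gcd_Vdet_preimage entries that by simp
  then have "m dvd Gcd {W $$ (i,j) | i j. i < n \<and> j < n}" by (intro Gcd_greatest) auto
  then have "m dvd 1" unfolding entries_coprime .
  then show ?thesis using m by simp
qed

lemma deltaQ_preimage: "deltaQ n preimage = delta"
  using deltaQ_preimage_dvd_delta delta_dvd_deltaQ_preimage delta_pos
  by (simp add: deltaQ_def zdvd_antisym_nonneg)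

lemma star_mat_adj_prim:
  "star_mat (map_mat rat_of_int adj_prim)
     = map_mat rat_of_int W * mat_diag n (\<lambda>i. 1 / rat_of_int (hat_diag i))"
proof -
  let ?A = "map_mat rat_of_int adj_prim"
    and ?X = "map_mat rat_of_int W * mat_diag n (\<lambda>i. 1 / rat_of_int (hat_diag i))"
  have A: "transpose_mat ?A \<in> carrier_mat n n" and X: "?X \<in> carrier_mat n n"
    using adj_prim_carrier W_carrier by auto
  have "transpose_mat ?A * ?X
      = (transpose_mat ?A * map_mat rat_of_int W) * mat_diag n (\<lambda>i. 1 / rat_of_int (hat_diag i))"
    using adj_prim_carrier W_carrier by (simp add: assoc_mult_mat[of _ n n _ n _ n])
  also have "transpose_mat ?A * map_mat rat_of_int W = map_mat rat_of_int (transpose_mat adj_prim * W)"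
    using adj_prim_carrier W_carrier by (simp add: of_int_hom.mat_hom_mult[of _ n n _ n] map_mat_transpose)
  also have "\<dots> * mat_diag n (\<lambda>i. 1 / rat_of_int (hat_diag i)) = 1\<^sub>m n"
    unfolding transpose_adj_prim_mult_W map_mat_of_int_mat_diag mat_diag_diag
    using hat_diag_pos by (auto intro!: eq_matI simp: mat_diag_def order_less_imp_not_eq2)
  finally have "?X * transpose_mat ?A = 1\<^sub>m n" by (rule mat_mult_left_right_inverse[OF A X])
  then have "?A * transpose_mat ?X = 1\<^sub>m n"
    using arg_cong[of _ _ transpose_mat] transpose_mult[OF X A] by simp
  then have "inv_mat ?A = transpose_mat ?X"
    using adj_prim_carrier X by (intro inv_mat_eqI) auto
  then show ?thesis unfolding star_mat_def by simp
qed

lemma weighted_transverse_preimage: "weighted_transverse n preimage = map_mat rat_of_int W"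
proof -
  have "rat_of_int delta \<cdot>\<^sub>m mat_diag n (\<lambda>k. 1 / rat_of_int \<bar>Vdet preimage (Suc k)\<bar>)
      = mat_diag n (\<lambda>k. rat_of_int (hat_diag k))"
    using delta_eq_row_ratio_mult_hat_diag row_ratio_pos
    by (intro eq_matI) (auto simp: mat_diag_def abs_Vdet_preimage_Suc order_less_imp_not_eq2 simp del: of_int_abs)
  moreover have "mat_diag n (\<lambda>i. 1 / rat_of_int (hat_diag i)) * mat_diag n (\<lambda>k. rat_of_int (hat_diag k))
      = 1\<^sub>m n"
    unfolding mat_diag_diag using hat_diag_pos
    by (auto intro!: eq_matI simp: mat_diag_def order_less_imp_not_eq2)
  ultimately show ?thesis
    unfolding weighted_transverse_def V0_def del_col_preimage_0 star_mat_adj_prim deltaQ_preimage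
    using W_carrier by (simp add: assoc_mult_mat[of _ n n _ n _ n] del: mat_diag_diag of_int_abs)
qed

lemma P_admissible: "P_admissible n W"
  unfolding P_admissible_def using W_carrier F_admissible_preimage weighted_transverse_preimage by auto

end

lemma (in nonsingular_int_mat) P_admissible_iff_col_sums_dvd:
  assumes "Gcd {W $$ (i,j) | i j. i < n \<and> j < n} = 1"
  shows "P_admissible n W \<longleftrightarrow> (\<forall>j<n. hat_det * adj_gcd dvd adj_col_sums $ j)"
proof
  assume "P_admissible n W"
  then obtain V where "F_admissible n V" "map_mat rat_of_int W = weighted_transverse n V"
    unfolding P_admissible_def by blast
  then interpret P_admissible_witness n W V by unfold_locales
  show "\<forall>j<n. hat_det * adj_gcd dvd adj_col_sums $ j"
    using hat_det_mult_adj_gcd_dvd_adj_col_sums by blast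
next
  assume "\<forall>j<n. hat_det * adj_gcd dvd adj_col_sums $ j"
  then interpret divisible_col_sums n W using assms by unfold_locales auto
  show "P_admissible n W" by (rule P_admissible)
qed

lemma of_int_multiple_iff_dvd: "(\<exists>k::int. rat_of_int x = rat_of_int d * rat_of_int k) \<longleftrightarrow> d dvd x"
  by (metis dvd_def of_int_eq_iff of_int_mult)

lemma map_vec_of_int_eq_const_iff:
  "x \<in> carrier_vec n \<Longrightarrow> map_vec rat_of_int x = vec n (\<lambda>_. rat_of_int d) \<longleftrightarrow> x = vec n (\<lambda>_. d)"
  by (auto simp: vec_eq_iff)

theorem mainTheorem10:
  fixes n :: nat and W :: "int mat"
  assumes W_dim: "W \<in> carrier_mat n n"
    and W_inv: "det W \<noteq> 0"
    and W_gcd: "Gcd {W $$ (i,j) | i j. i < n \<and> j < n} = 1"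
  defines "s \<equiv> Gcd {adj_mat W $$ (i,j) | i j. i < n \<and> j < n}"
    and "v \<equiv> vec n (\<lambda>j. \<Sum>i<n. adj_mat W $$ (i,j))"
    and "q0 \<equiv> \<bar>det (W_hat W)\<bar>"
    and "\<delta> \<equiv> rat_of_int \<bar>det W\<bar> /
        rat_of_int (Gcd {adj_mat W $$ (i,j) | i j. i < n \<and> j < n})"
  shows "(P_admissible n W \<longleftrightarrow>
            (\<forall>j<n. \<exists>k::int. rat_of_int (v $ j) = q0 * rat_of_int s * rat_of_int k))
       \<and> ((\<forall>j<n. \<exists>k::int. rat_of_int (v $ j) = q0 * rat_of_int s * rat_of_int k) \<longleftrightarrow>
            ((\<exists>k::int. \<delta> = q0 * rat_of_int k) \<and>
             (\<exists>c::int vec. c \<in> carrier_vec n \<and>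
                map_vec rat_of_int (transpose_mat W *\<^sub>v c) = vec n (\<lambda>_. \<delta> / q0))))"
proof -
  have "n > 0" using W_gcd by (cases n) auto
  interpret nonsingular_int_mat n W by unfold_locales (use W_dim W_inv \<open>n > 0\<close> in auto)
  have q0: "q0 = rat_of_int hat_det" unfolding q0_def by (rule abs_det_W_hat)
  have \<delta>: "\<delta> = rat_of_int delta"
    using adj_gcd_mult_delta adj_gcd_pos unfolding \<delta>_def adj_gcd_def[symmetric]
    by (simp add: field_simps flip: of_int_mult)
  have b: "(\<forall>j<n. \<exists>k::int. rat_of_int (v $ j) = q0 * rat_of_int s * rat_of_int k) \<longleftrightarrow>
      (\<forall>j<n. hat_det * adj_gcd dvd adj_col_sums $ j)"
    unfolding q0 s_def v_def adj_gcd_def[symmetric] adj_col_sums_def[symmetric]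
    by (simp flip: of_int_multiple_iff_dvd)
  have "\<delta> / q0 = rat_of_int (delta div hat_det)" if "hat_det dvd delta"
    using that hat_det_pos unfolding \<delta> q0 by auto
  then have c: "((\<exists>k::int. \<delta> = q0 * rat_of_int k) \<and>
      (\<exists>c::int vec. c \<in> carrier_vec n \<and>
         map_vec rat_of_int (transpose_mat W *\<^sub>v c) = vec n (\<lambda>_. \<delta> / q0))) \<longleftrightarrow>
      hat_det dvd delta \<and>
      (\<exists>c \<in> carrier_vec n. transpose_mat W *\<^sub>v c = vec n (\<lambda>_. delta div hat_det))"
    using W_dim unfolding \<delta> q0 of_int_multiple_iff_dvd
    by (auto simp: map_vec_of_int_eq_const_iff[of _ n])
  show ?thesis
    unfolding b c col_sums_dvd_iff_lattice[symmetric] P_admissible_iff_col_sums_dvd[OF W_gcd] by simp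
qed

end
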